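(* Let $\mathcal{L}=(\mathrm{Fm},\vdash)$ be a selfextensional logic and let $S(P,N)$ denote a static positive permission system $S^{(\mathrm{R})}(P,N)$ (for a fixed rule (R)) or $S^i(P,N)$ (for a fixed $1\le i\le4$). For every $P,N\subseteq\mathrm{Fm}\times\mathrm{Fm}$, $S(P,N)\subseteq_c P_N$ if and only if $P$ and $N$ are cross-coherent (with respect to the same choice of $S$).
   Context: $Cn(\Gamma)=\{\psi\mid\Gamma\vdash\psi\}$, $Cn(\alpha)=Cn(\{\alpha\})$, $Cn(\varphi,\psi)=Cn(\{\varphi,\psi\})$. Normative systems and permission systems are relations $\subseteq\mathrm{Fm}\times\mathrm{Fm}$. For a rule (R) on relations, $N^{(\mathrm{R})}$ is the smallest extension of $N$ closed under (R), and $N^{(\mathrm{R})}_{(\alpha,\varphi)}$ the smallest extension of $N\cup\{(\alpha,\varphi)\}$ closed under (R); $N^i$, $N^i_{(\alpha,\varphi)}$ likewise for the rule sets $i=1$: $(\top)$,(SI),(WO),(AND); $i=2$: these plus (OR); $i=3$: $(\top)$,(SI),(WO),(AND),(CT); $i=4$: all six (rules: $(\top)$: $(\top,\top)$; (SI): from $(\alpha,\varphi)$ and $\beta\vdash\alpha$ infer $(\beta,\varphi)$; (WO): from $(\alpha,\varphi)$ and $\varphi\vdash\psi$ infer $(\alpha,\psi)$; (AND): from $(\alpha,\varphi),(\alpha,\psi)$ infer $(\alpha,\varphi\wedge\psi)$; (OR): from $(\alpha,\varphi),(\beta,\varphi)$ infer $(\alpha\vee\beta,\varphi)$; (CT): from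 $(\alpha,\varphi),(\alpha\wedge\varphi,\psi)$ infer $(\alpha,\psi)$). Static positive permission: $S^{(\mathrm{R})}(P,N)=\bigcup\{N^{(\mathrm{R})}_{(\alpha,\varphi)}\mid(\alpha,\varphi)\in P\}$ if $P\neq\varnothing$ and $N^{(\mathrm{R})}$ otherwise; $S^i(P,N)$ likewise with $N^i$. $P_N=\{(\alpha,\varphi)\mid\forall\psi((\alpha,\psi)\in N\Rightarrow Cn(\varphi,\psi)\neq\mathrm{Fm})\}$. $M\subseteq_c M'$ means $(\alpha,\varphi)\in M$ and $Cn(\alpha)\neq\mathrm{Fm}$ imply $(\alpha,\varphi)\in M'$. $N$ and $P$ are cross-incoherent if there are $\gamma,\varphi,\psi$ with $(\gamma,\varphi)\in N$, $(\gamma,\psi)\in S(P,N)$, $Cn(\gamma)\neq\mathrm{Fm}$ and $Cn(\varphi,\psi)=\mathrm{Fm}$; cross-coherent otherwise. *)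

theory Defs
  imports Main
begin

datatype ('v, 'c) fm = Var 'v | Op 'c "('v, 'c) fm list"

fun subst :: "('v \<Rightarrow> ('v, 'c) fm) \<Rightarrow> ('v, 'c) fm \<Rightarrow> ('v, 'c) fm" where
  "subst \<sigma> (Var v) = \<sigma> v"
| "subst \<sigma> (Op c xs) = Op c (map (subst \<sigma>) xs)"

definition Top :: "'c \<Rightarrow> ('v, 'c) fm" where "Top cT = Op cT []"
definition Conj :: "'c \<Rightarrow> ('v, 'c) fm \<Rightarrow> ('v, 'c) fm \<Rightarrow> ('v, 'c) fm"
  where "Conj cA a b = Op cA [a, b]"
definition Disj :: "'c \<Rightarrow> ('v, 'c) fm \<Rightarrow> ('v, 'c) fm \<Rightarrow> ('v, 'c) fm"
  where "Disj cO a b = Op cO [a, b]"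

type_synonym ('v, 'c) cons = "('v, 'c) fm set \<Rightarrow> ('v, 'c) fm \<Rightarrow> bool"

definition is_logic :: "('v, 'c) cons \<Rightarrow> bool" where
  "is_logic der \<longleftrightarrow>
     (\<forall>\<Gamma> \<phi>. \<phi> \<in> \<Gamma> \<longrightarrow> der \<Gamma> \<phi>) \<and>
     (\<forall>\<Gamma> \<Delta> \<phi>. der \<Gamma> \<phi> \<and> \<Gamma> \<subseteq> \<Delta> \<longrightarrow> der \<Delta> \<phi>) \<and>
     (\<forall>\<Gamma> \<Delta> \<phi>. der \<Gamma> \<phi> \<and> (\<forall>\<psi>\<in>\<Gamma>. der \<Delta> \<psi>) \<longrightarrow> der \<Delta> \<phi>) \<and>
     (\<forall>\<Gamma> \<phi> \<sigma>. der \<Gamma> \<phi> \<longrightarrow> der (subst \<sigma> ` \<Gamma>) (subst \<sigma> \<phi>))"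

definition interder :: "('v, 'c) cons \<Rightarrow> ('v, 'c) fm \<Rightarrow> ('v, 'c) fm \<Rightarrow> bool" where
  "interder der a b \<longleftrightarrow> der {a} b \<and> der {b} a"

definition selfextensional :: "('v, 'c) cons \<Rightarrow> bool" where
  "selfextensional der \<longleftrightarrow> is_logic der \<and>
     (\<forall>c xs ys. list_all2 (interder der) xs ys \<longrightarrow> interder der (Op c xs) (Op c ys))"

definition Cn :: "('v, 'c) cons \<Rightarrow> ('v, 'c) fm set \<Rightarrow> ('v, 'c) fm set" where
  "Cn der \<Gamma> = {\<psi>. der \<Gamma> \<psi>}"

datatype rule = RTop | RSI | RWO | RAND | ROR | RCT

type_synonym ('v, 'c) nsys = "(('v, 'c) fm \<times> ('v, 'c) fm) set"

inductive_set closure :: "('v, 'c) cons \<Rightarrow> 'c \<Rightarrow> 'c \<Rightarrow> 'c \<Rightarrow> rule set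
    \<Rightarrow> ('v, 'c) nsys \<Rightarrow> ('v, 'c) nsys"
  for der cT cA cO Rs N where
  base: "x \<in> N \<Longrightarrow> x \<in> closure der cT cA cO Rs N"
| top: "RTop \<in> Rs \<Longrightarrow> (Top cT, Top cT) \<in> closure der cT cA cO Rs N"
| SI: "RSI \<in> Rs \<Longrightarrow> (a, \<phi>) \<in> closure der cT cA cO Rs N \<Longrightarrow> der {b} a
        \<Longrightarrow> (b, \<phi>) \<in> closure der cT cA cO Rs N"
| WO: "RWO \<in> Rs \<Longrightarrow> (a, \<phi>) \<in> closure der cT cA cO Rs N \<Longrightarrow> der {\<phi>} \<psi>
        \<Longrightarrow> (a, \<psi>) \<in> closure der cT cA cO Rs N"
| AND: "RAND \<in> Rs \<Longrightarrow> (a, \<phi>) \<in> closure der cT cA cO Rs N \<Longrightarrow> (a, \<psi>) \<in> closure der cT cA cO Rs N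
        \<Longrightarrow> (a, Conj cA \<phi> \<psi>) \<in> closure der cT cA cO Rs N"
| OR: "ROR \<in> Rs \<Longrightarrow> (a, \<phi>) \<in> closure der cT cA cO Rs N \<Longrightarrow> (b, \<phi>) \<in> closure der cT cA cO Rs N
        \<Longrightarrow> (Disj cO a b, \<phi>) \<in> closure der cT cA cO Rs N"
| CT: "RCT \<in> Rs \<Longrightarrow> (a, \<phi>) \<in> closure der cT cA cO Rs N
        \<Longrightarrow> (Conj cA a \<phi>, \<psi>) \<in> closure der cT cA cO Rs N
        \<Longrightarrow> (a, \<psi>) \<in> closure der cT cA cO Rs N"

fun ruleset :: "nat \<Rightarrow> rule set" where
  "ruleset (Suc 0) = {RTop, RSI, RWO, RAND}"
| "ruleset (Suc (Suc 0)) = {RTop, RSI, RWO, RAND, ROR}"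
| "ruleset (Suc (Suc (Suc 0))) = {RTop, RSI, RWO, RAND, RCT}"
| "ruleset _ = {RTop, RSI, RWO, RAND, ROR, RCT}"

definition admissible_rules :: "rule set set" where
  "admissible_rules = (\<lambda>R. {R}) ` UNIV \<union> ruleset ` {1..4}"

definition static_perm :: "('v, 'c) cons \<Rightarrow> 'c \<Rightarrow> 'c \<Rightarrow> 'c \<Rightarrow> rule set
    \<Rightarrow> ('v, 'c) nsys \<Rightarrow> ('v, 'c) nsys \<Rightarrow> ('v, 'c) nsys" where
  "static_perm der cT cA cO Rs P N =
     (if P \<noteq> {} then (\<Union>x\<in>P. closure der cT cA cO Rs (N \<union> {x}))
      else closure der cT cA cO Rs N)"

definition P_of :: "('v, 'c) cons \<Rightarrow> ('v, 'c) nsys \<Rightarrow> ('v, 'c) nsys" where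
  "P_of der N = {(\<alpha>, \<phi>). \<forall>\<psi>. (\<alpha>, \<psi>) \<in> N \<longrightarrow> Cn der {\<phi>, \<psi>} \<noteq> UNIV}"

definition subset_c :: "('v, 'c) cons \<Rightarrow> ('v, 'c) nsys \<Rightarrow> ('v, 'c) nsys \<Rightarrow> bool" where
  "subset_c der M M' \<longleftrightarrow> (\<forall>\<alpha> \<phi>. (\<alpha>, \<phi>) \<in> M \<and> Cn der {\<alpha>} \<noteq> UNIV \<longrightarrow> (\<alpha>, \<phi>) \<in> M')"

definition cross_incoherent :: "('v, 'c) cons \<Rightarrow> 'c \<Rightarrow> 'c \<Rightarrow> 'c \<Rightarrow> rule set
    \<Rightarrow> ('v, 'c) nsys \<Rightarrow> ('v, 'c) nsys \<Rightarrow> bool" where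
  "cross_incoherent der cT cA cO Rs N P \<longleftrightarrow>
     (\<exists>\<gamma> \<phi> \<psi>. (\<gamma>, \<phi>) \<in> N \<and> (\<gamma>, \<psi>) \<in> static_perm der cT cA cO Rs P N
        \<and> Cn der {\<gamma>} \<noteq> UNIV \<and> Cn der {\<phi>, \<psi>} = UNIV)"

definition cross_coherent where
  "cross_coherent der cT cA cO Rs N P \<longleftrightarrow> \<not> cross_incoherent der cT cA cO Rs N P"

end

theory Submission
  imports Defs
begin

lemma mem_P_of_iff:
  "(\<alpha>, \<psi>) \<in> P_of der N \<longleftrightarrow> (\<forall>\<phi>. (\<alpha>, \<phi>) \<in> N \<longrightarrow> Cn der {\<phi>, \<psi>} \<noteq> UNIV)"
  by (simp add: P_of_def insert_commute)

lemma subset_c_P_of_iff: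
  "subset_c der M (P_of der N) \<longleftrightarrow>
     \<not> (\<exists>\<gamma> \<phi> \<psi>. (\<gamma>, \<phi>) \<in> N \<and> (\<gamma>, \<psi>) \<in> M \<and> Cn der {\<gamma>} \<noteq> UNIV \<and> Cn der {\<phi>, \<psi>} = UNIV)"
  unfolding subset_c_def mem_P_of_iff by blast

text \<open>Cross-coherence is the instance M = S(P, N) of the lemma above.\<close>

theorem proposition4p12:
  fixes der :: "('v, 'c) cons" and cT cA cO :: 'c and Rs :: "rule set"
    and P N :: "('v, 'c) nsys"
  assumes "selfextensional der"
    and "Rs \<in> admissible_rules"
  shows "subset_c der (static_perm der cT cA cO Rs P N) (P_of der N)
           \<longleftrightarrow> cross_coherent der cT cA cO Rs N P"
  unfolding cross_coherent_def cross_incoherent_def subset_c_P_of_iff ..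

end
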